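(* Let $f:\mathbb{R}\to\mathbb{R}$ be smooth, let $H(q,p)=\frac{p^2}{2}+f(q)$ on $T^*\mathbb{R}$ with coordinates $(q,p)$, and let $\omega=\frac{1}{p}\,dp\wedge dq$ be the twisted $b$-symplectic form, so that the vector field $X$ satisfying $\iota_X\omega=-dH$ is $X=p^2\frac{\partial}{\partial q}-p\,f'(q)\frac{\partial}{\partial p}$. Then there is no Lie group action $\rho:G\times\mathbb{R}\to\mathbb{R}$ whose cotangent lift $\hat\rho:G\times T^*\mathbb{R}\to T^*\mathbb{R}$ has $X$ as an infinitesimal generator (i.e. as the fundamental vector field of some element of the Lie algebra of $G$); in other words, the dynamics of $X$ cannot be obtained as the (twisted $b$-)cotangent lift of a group action on the base $\mathbb{R}$ with Hamiltonian/moment map $H$.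
   Context: For an action $\rho$ of a Lie group $G$ on a manifold $M$, the cotangent lift of $\rho_g$ is the diffeomorphism $\hat\rho_g$ of $T^*M$ given by $\hat\rho_g(q,p)=(\rho_g(q),((d\rho_g)_q^* )^{-1}(p))$; it covers $\rho_g$, i.e. $\pi\circ\hat\rho_g=\rho_g\circ\pi$ where $\pi:T^*M\to M$ is the bundle projection. The twisted $b$-cotangent lift is the same lifted action considered with respect to the twisted $b$-symplectic form $\omega=\frac{c}{p_1}dp_1\wedge dq_1+\sum_{i\ge2}dp_i\wedge dq_i$ (here $M=\mathbb{R}$, $c=1$). *)

theory Defs
  imports "HOL-Analysis.Analysis"
begin

definition smooth_fun :: "(real \<Rightarrow> real) \<Rightarrow> bool" where
  "smooth_fun g \<longleftrightarrow> (\<forall>n x. ((deriv ^^ n) g) differentiable (at x))"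

text \<open>A one-parameter group of diffeomorphisms of the base R (the action of a
one-parameter subgroup t maps to exp(t xi) of a Lie group acting smoothly on R).\<close>
definition one_param_action :: "(real \<Rightarrow> real \<Rightarrow> real) \<Rightarrow> bool" where
  "one_param_action \<phi> \<longleftrightarrow>
     \<phi> 0 = id \<and> (\<forall>s t. \<phi> (s + t) = \<phi> s \<circ> \<phi> t) \<and>
     (\<forall>t. smooth_fun (\<phi> t)) \<and> (\<forall>q. smooth_fun (\<lambda>t. \<phi> t q))"

text \<open>Cotangent lift on T*R = R x R, coordinates (q,p):
  (q,p) maps to (rho(q), ((d rho_q)^*)^{-1} p) = (rho q, p / rho'(q)).\<close>
definition cotangent_lift :: "(real \<Rightarrow> real) \<Rightarrow> real \<times> real \<Rightarrow> real \<times> real" where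
  "cotangent_lift g = (\<lambda>(q, p). (g q, p / deriv g q))"

definition X_field :: "(real \<Rightarrow> real) \<Rightarrow> real \<times> real \<Rightarrow> real \<times> real" where
  "X_field f = (\<lambda>(q, p). (p ^ 2, - p * deriv f q))"

definition generates :: "(real \<Rightarrow> real \<Rightarrow> real) \<Rightarrow> (real \<times> real \<Rightarrow> real \<times> real) \<Rightarrow> bool" where
  "generates \<phi> V \<longleftrightarrow>
     (\<forall>z. ((\<lambda>t. cotangent_lift (\<phi> t) z) has_vector_derivative V z) (at 0))"

end

theory Submission
  imports Defs
begin

text \<open>The cotangent lift covers the base map, so along the lifted flow the q-coordinate
  of every point (q, p) moves like \<open>\<phi> t q\<close>, whatever p is. Hence the q-component of any
  generator of a lifted action is independent of p, whereas the q-component of X is p^2.\<close>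

lemma fst_cotangent_lift [simp]: "fst (cotangent_lift g z) = g (fst z)"
  by (cases z) (simp add: cotangent_lift_def)

lemma has_vector_derivative_fst:
  assumes "(g has_vector_derivative v) F"
  shows "((\<lambda>t. fst (g t)) has_vector_derivative fst v) F"
  using has_derivative_fst[OF assms[unfolded has_vector_derivative_def]]
  by (simp add: has_vector_derivative_def)

lemma generates_imp_base_derivative:
  assumes "generates \<phi> V"
  shows "((\<lambda>t. \<phi> t q) has_vector_derivative fst (V (q, p))) (at 0)"
  using has_vector_derivative_fst[OF assms[unfolded generates_def, rule_format, of "(q, p)"]]
  by simp

lemma generates_fst_independent:
  assumes "generates \<phi> V"
  shows "fst (V (q, p)) = fst (V (q, p'))"
  using vector_derivative_unique_at generates_imp_base_derivative[OF assms] by blast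

theorem lemma3p6:
  fixes f :: "real \<Rightarrow> real"
  assumes "smooth_fun f"
  shows "\<not> (\<exists>\<phi>. one_param_action \<phi> \<and> generates \<phi> (X_field f))"
proof
  assume "\<exists>\<phi>. one_param_action \<phi> \<and> generates \<phi> (X_field f)"
  then obtain \<phi> where "generates \<phi> (X_field f)" by blast
  then have "fst (X_field f (0, 0)) = fst (X_field f (0, 1))"
    by (rule generates_fst_independent)
  then show False by (simp add: X_field_def)
qed

end
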